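(* With the notation $u$, $u_1=\sqrt{1-u^2}$, $u_2=\sqrt{1-\rho_1u^2}$, $P_1=(au,bu_1)$ and the 3-periodic $P_1P_2P_3$ (fixed orientation) as described, let $s_1=|P_2P_3|$, $s_2=|P_3P_1|$, $s_3=|P_1P_2|$. Then there exist polynomials $h_0,h_1,h_2,h_3\in\mathbb{R}[u]$ (coefficients depending only on $a,b$), with $h_1\not\equiv0$, and a sign $\varepsilon\in\{\pm1\}$, such that for all $u\in(-1,1)$: $$h_1(u)\,s_1^2=h_0(u),\qquad h_1(u)\,s_2^2=h_3(u)-\varepsilon\,h_2(u)\,u_1u_2,\qquad h_1(u)\,s_3^2=h_3(u)+\varepsilon\,h_2(u)\,u_1u_2.$$ In particular $s_1,s_2,s_3$ satisfy nonzero polynomial equations $g_1(s_1,u)=0$, $g_2(s_2,u,u_1,u_2)=0$, $g_3(s_3,u,u_1,u_2)=0$.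
   Context: Fix real numbers $a>b>0$, let $E$ be the ellipse $x^2/a^2+y^2/b^2=1$, $c^2=a^2-b^2$, $\delta=\sqrt{a^4-a^2b^2+b^4}$ and $\rho_1=\dfrac{c^2(b^2+\delta)^2}{a^6}$. A 3-periodic is a non-degenerate triangle $P_1P_2P_3$ with all vertices on $E$ such that at each vertex $P_j$ the normal line to $E$ at $P_j$ bisects the interior angle of the triangle at $P_j$. Every point of $E$ is a vertex of exactly one 3-periodic. For $u\in(-1,1)$, $P_1=(au,b\sqrt{1-u^2})$ and $P_2,P_3$ are the other vertices of the 3-periodic through $P_1$, labelled in one fixed orientation for all $u$. *)

theory Defs
  imports "HOL-Computational_Algebra.Polynomial"
begin

type_synonym pt = "real \<times> real"

definition on_ellipse :: "real \<Rightarrow> real \<Rightarrow> pt \<Rightarrow> bool" where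
  "on_ellipse a b P \<longleftrightarrow> (fst P)^2 / a^2 + (snd P)^2 / b^2 = 1"

definition seglen :: "pt \<Rightarrow> pt \<Rightarrow> real" where
  "seglen P Q = sqrt ((fst Q - fst P)^2 + (snd Q - snd P)^2)"

definition signed_area2 :: "pt \<Rightarrow> pt \<Rightarrow> pt \<Rightarrow> real" where
  "signed_area2 P Q R = (fst Q - fst P) * (snd R - snd P) - (snd Q - snd P) * (fst R - fst P)"

text \<open>The normal line to E at P (direction (x/a^2, y/b^2)) bisects the interior angle
  of triangle PQR at P: the normal is parallel to the sum of the unit vectors from P
  towards Q and towards R (the interior bisector direction).\<close>
definition normal_bisects :: "real \<Rightarrow> real \<Rightarrow> pt \<Rightarrow> pt \<Rightarrow> pt \<Rightarrow> bool" where
  "normal_bisects a b P Q R \<longleftrightarrow>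
     (let nx = fst P / a^2; ny = snd P / b^2;
          dx = (fst Q - fst P) / seglen P Q + (fst R - fst P) / seglen P R;
          dy = (snd Q - snd P) / seglen P Q + (snd R - snd P) / seglen P R
      in nx * dy - ny * dx = 0)"

definition three_periodic :: "real \<Rightarrow> real \<Rightarrow> pt \<Rightarrow> pt \<Rightarrow> pt \<Rightarrow> bool" where
  "three_periodic a b P1 P2 P3 \<longleftrightarrow>
     signed_area2 P1 P2 P3 \<noteq> 0 \<and>
     on_ellipse a b P1 \<and> on_ellipse a b P2 \<and> on_ellipse a b P3 \<and>
     normal_bisects a b P1 P2 P3 \<and> normal_bisects a b P2 P3 P1 \<and>
     normal_bisects a b P3 P1 P2"

definition ell_delta :: "real \<Rightarrow> real \<Rightarrow> real" where
  "ell_delta a b = sqrt (a^4 - a^2 * b^2 + b^4)"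

definition rho1 :: "real \<Rightarrow> real \<Rightarrow> real" where
  "rho1 a b = (a^2 - b^2) * (b^2 + ell_delta a b)^2 / a^6"

end

theory Submission
  imports Defs
begin

text \<open>Write m(P,Q) = 1 - x x'/a^2 - y y'/b^2 (ell_defect) for P = (x,y), Q = (x',y').
  Since the normal at P is (x/a^2, y/b^2), the reflection law at a vertex P of a 3-periodic
  says that m(P,Q) / |PQ| is the same for both sides through P, so m = k |PQ| on all three
  sides. In the coordinates (x/a, y/b) on the unit circle each of these equations becomes
  one symmetric bilinear relation between the endpoints, and a Poncelet-type closure
  argument for three points in this relation pins down k^2 as a constant kappa_sq of the
  ellipse.

  At the vertex P1, decomposing a side along the normal and the tangent turns m = k |PQ|
  into a linear equation |PQ| (alpha - beta w) = 2 k N^2, where N is the squared length of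
  the normal and w (normal_cross), the cross product of the normal with the unit side
  vector, satisfies w^2 = N - k^2; the two sides through P1 have opposite w, its sign given
  by the orientation. Multiplying by alpha + beta w and squaring leaves w only in a product
  with beta, and beta w = +-(const) u sqrt(1 - u^2) sqrt(1 - rho1 u^2); the third side
  follows from the law of cosines.\<close>

section \<open>Segments and the ellipse defect\<close>

lemma seglen_sym: "seglen P Q = seglen Q P"
  unfolding seglen_def by (simp add: power2_commute)

lemma seglen_sq: "(seglen P Q)^2 = (fst Q - fst P)^2 + (snd Q - snd P)^2"
  unfolding seglen_def by simp

lemma seglen_pos: "P \<noteq> Q \<Longrightarrow> seglen P Q > 0"
  unfolding seglen_def by (cases P; cases Q) (auto simp: sum_power2_gt_zero_iff)

lemma signed_area2_rotate: "signed_area2 Q R P = signed_area2 P Q R"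
  unfolding signed_area2_def by (simp add: algebra_simps)

lemma signed_area2_nonzero_imp_distinct:
  "signed_area2 P Q R \<noteq> 0 \<Longrightarrow> P \<noteq> Q \<and> P \<noteq> R \<and> Q \<noteq> R"
  unfolding signed_area2_def by auto

definition ell_defect :: "real \<Rightarrow> real \<Rightarrow> pt \<Rightarrow> pt \<Rightarrow> real" where
  "ell_defect a b P Q = 1 - fst P * fst Q / a^2 - snd P * snd Q / b^2"

lemma ell_defect_sym: "ell_defect a b P Q = ell_defect a b Q P"
  unfolding ell_defect_def by (simp add: algebra_simps)

lemma two_ell_defect_eq:
  assumes "on_ellipse a b P" "on_ellipse a b Q"
  shows "2 * ell_defect a b P Q = (fst Q - fst P)^2 / a^2 + (snd Q - snd P)^2 / b^2"
proof -
  have "(fst Q - fst P)^2 / a^2 + (snd Q - snd P)^2 / b^2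
      = ((fst P)^2 / a^2 + (snd P)^2 / b^2) + ((fst Q)^2 / a^2 + (snd Q)^2 / b^2)
        - 2 * (fst P * fst Q / a^2 + snd P * snd Q / b^2)"
    by (simp add: power2_eq_square algebra_simps add_divide_distrib diff_divide_distrib)
  with assms show ?thesis
    unfolding on_ellipse_def ell_defect_def by simp
qed

lemma ell_defect_pos:
  assumes "a > 0" "b > 0" "on_ellipse a b P" "on_ellipse a b Q" "P \<noteq> Q"
  shows "ell_defect a b P Q > 0"
proof -
  have "fst Q - fst P \<noteq> 0 \<or> snd Q - snd P \<noteq> 0"
    using \<open>P \<noteq> Q\<close> by (auto simp: prod_eq_iff)
  then have "(fst Q - fst P)^2 / a^2 + (snd Q - snd P)^2 / b^2 > 0"
    using assms(1,2) by (auto intro: add_pos_nonneg add_nonneg_pos)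
  then show ?thesis
    using two_ell_defect_eq[OF assms(3,4)] by simp
qed

section \<open>The reflection law\<close>

text \<open>The sum of two unit vectors is orthogonal to their difference.\<close>
lemma parallel_to_unit_sum_imp_equal_projections:
  fixes nx ny vx vy wx wy :: real
  assumes "vx^2 + vy^2 = 1" "wx^2 + wy^2 = 1"
    and nonzero: "vx + wx \<noteq> 0 \<or> vy + wy \<noteq> 0"
    and parallel: "nx * (vy + wy) - ny * (vx + wx) = 0"
  shows "nx * vx + ny * vy = nx * wx + ny * wy"
proof -
  have orth: "(vx + wx) * (vx - wx) + (vy + wy) * (vy - wy) = 0"
    using assms(1,2) by (simp add: algebra_simps power2_eq_square)
  have "(vx + wx) * (nx * (vx - wx) + ny * (vy - wy)) = 0"
       "(vy + wy) * (nx * (vx - wx) + ny * (vy - wy)) = 0"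
    using orth parallel by algebra+
  with nonzero have "nx * (vx - wx) + ny * (vy - wy) = 0" by auto
  then show ?thesis by (simp add: algebra_simps)
qed

lemma normal_dot_chord:
  assumes "on_ellipse a b P"
  shows "fst P / a^2 * (fst Q - fst P) + snd P / b^2 * (snd Q - snd P) = - ell_defect a b P Q"
proof -
  have "fst P / a^2 * (fst Q - fst P) + snd P / b^2 * (snd Q - snd P)
      = fst P * fst Q / a^2 + snd P * snd Q / b^2 - ((fst P)^2 / a^2 + (snd P)^2 / b^2)"
    by (simp add: power2_eq_square algebra_simps diff_divide_distrib)
  with assms show ?thesis unfolding on_ellipse_def ell_defect_def by simp
qed

text \<open>The defect per unit length of a side is minus the projection of the normal onto it
  (normal_dot_chord), so this is the reflection law.\<close>
lemma normal_bisects_imp_defect_ratio_eq: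
  assumes nb: "normal_bisects a b P Q R" and area: "signed_area2 P Q R \<noteq> 0"
    and P: "on_ellipse a b P"
  shows "ell_defect a b P Q / seglen P Q = ell_defect a b P R / seglen P R"
proof -
  define LQ LR where "LQ = seglen P Q" and "LR = seglen P R"
  have "LQ > 0" "LR > 0"
    using signed_area2_nonzero_imp_distinct[OF area] seglen_pos unfolding LQ_def LR_def by auto
  define vx vy wx wy
    where "vx = (fst Q - fst P) / LQ" and "vy = (snd Q - snd P) / LQ"
      and "wx = (fst R - fst P) / LR" and "wy = (snd R - snd P) / LR"
  have "vx^2 + vy^2 = (seglen P Q)^2 / LQ^2" "wx^2 + wy^2 = (seglen P R)^2 / LR^2"
    unfolding vx_def vy_def wx_def wy_def seglen_sq by (simp_all add: power_divide add_divide_distrib)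
  then have "vx^2 + vy^2 = 1" "wx^2 + wy^2 = 1"
    using \<open>LQ > 0\<close> \<open>LR > 0\<close> unfolding LQ_def LR_def by simp_all
  moreover have "vx + wx \<noteq> 0 \<or> vy + wy \<noteq> 0"
  proof (rule ccontr)
    assume "\<not> (vx + wx \<noteq> 0 \<or> vy + wy \<noteq> 0)"
    then have "fst R - fst P = - LR * vx" "snd R - snd P = - LR * vy"
              "fst Q - fst P = LQ * vx" "snd Q - snd P = LQ * vy"
      using \<open>LQ > 0\<close> \<open>LR > 0\<close> unfolding vx_def vy_def wx_def wy_def
      by (auto simp: field_simps)
    then have "signed_area2 P Q R = 0" unfolding signed_area2_def by simp
    with area show False ..
  qed
  moreover have "fst P / a^2 * (vy + wy) - snd P / b^2 * (vx + wx) = 0"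
    using nb unfolding normal_bisects_def Let_def vx_def vy_def wx_def wy_def LQ_def LR_def
    by simp
  ultimately have "fst P / a^2 * vx + snd P / b^2 * vy = fst P / a^2 * wx + snd P / b^2 * wy"
    by (rule parallel_to_unit_sum_imp_equal_projections)
  moreover have "fst P / a^2 * vx + snd P / b^2 * vy = - ell_defect a b P Q / LQ"
    "fst P / a^2 * wx + snd P / b^2 * wy = - ell_defect a b P R / LR"
    unfolding vx_def vy_def wx_def wy_def normal_dot_chord[OF P, symmetric]
    by (simp_all add: add_divide_distrib)
  ultimately show ?thesis unfolding LQ_def LR_def by simp
qed

lemma three_periodic_common_ratio:
  assumes "a > 0" "b > 0" and tp: "three_periodic a b P1 P2 P3"
  obtains k where "k > 0" "ell_defect a b P1 P2 = k * seglen P1 P2"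
    "ell_defect a b P1 P3 = k * seglen P1 P3" "ell_defect a b P2 P3 = k * seglen P2 P3"
proof -
  have area: "signed_area2 P1 P2 P3 \<noteq> 0" and on: "on_ellipse a b P1" "on_ellipse a b P2"
    and nb: "normal_bisects a b P1 P2 P3" "normal_bisects a b P2 P3 P1"
    using tp unfolding three_periodic_def by auto
  have L: "seglen P1 P2 > 0" "seglen P1 P3 > 0" "seglen P2 P3 > 0"
    using signed_area2_nonzero_imp_distinct[OF area] seglen_pos by auto
  define k where "k = ell_defect a b P1 P2 / seglen P1 P2"
  have r1: "k = ell_defect a b P1 P3 / seglen P1 P3"
    using normal_bisects_imp_defect_ratio_eq[OF nb(1) area on(1)] unfolding k_def .
  have "signed_area2 P2 P3 P1 \<noteq> 0" using area signed_area2_rotate by metis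
  from normal_bisects_imp_defect_ratio_eq[OF nb(2) this on(2)]
  have r2: "ell_defect a b P2 P3 / seglen P2 P3 = k"
    unfolding k_def ell_defect_sym[of a b P2 P1] seglen_sym[of P2 P1] by simp
  have "k > 0"
    using ell_defect_pos[OF assms(1,2) on] signed_area2_nonzero_imp_distinct[OF area] L
    unfolding k_def by simp
  moreover have "ell_defect a b P1 P2 = k * seglen P1 P2" using L(1) unfolding k_def by simp
  moreover have "ell_defect a b P1 P3 = k * seglen P1 P3" using L(2) unfolding r1 by simp
  moreover have "ell_defect a b P2 P3 = k * seglen P2 P3" using L(3) unfolding r2[symmetric] by simp
  ultimately show ?thesis by (rule that)
qed

section \<open>The invariant ratio of defect to length\<close>

text \<open>On the unit circle, with X = x/a, Y = y/b, both (X' - X)^2 and (Y' - Y)^2 are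
  multiples of the defect m = 1 - X X' - Y Y', so m^2 = k^2 |PQ|^2 becomes linear once m is
  cancelled.\<close>
lemma defect_ratio_imp_circle_relation:
  assumes ab: "a > 0" "b > 0" and on: "on_ellipse a b P" "on_ellipse a b Q" and "P \<noteq> Q"
    and ratio: "ell_defect a b P Q = k * seglen P Q"
  shows "(1 + k^2 * (b^2 - a^2)) * (fst P / a) * (fst Q / a)
           + (1 - k^2 * (b^2 - a^2)) * (snd P / b) * (snd Q / b) = 1 - k^2 * (a^2 + b^2)"
proof -
  define X Y X' Y' where "X = fst P / a" and "Y = snd P / b" and "X' = fst Q / a" and "Y' = snd Q / b"
  have circ: "X^2 + Y^2 = 1" "X'^2 + Y'^2 = 1"
    using on unfolding on_ellipse_def X_def Y_def X'_def Y'_def by (simp_all add: power_divide)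
  define m where "m = 1 - X * X' - Y * Y'"
  have m: "m = ell_defect a b P Q"
    unfolding m_def ell_defect_def X_def Y_def X'_def Y'_def by (simp add: power2_eq_square)
  have "m \<noteq> 0" using ell_defect_pos[OF ab on \<open>P \<noteq> Q\<close>] m by simp
  have coords: "fst P = a * X" "fst Q = a * X'" "snd P = b * Y" "snd Q = b * Y'"
    unfolding X_def Y_def X'_def Y'_def using ab by auto
  have dx: "(X' - X)^2 = m * (1 - X * X' + Y * Y')" and dy: "(Y' - Y)^2 = m * (1 + X * X' - Y * Y')"
    unfolding m_def using circ by algebra+
  have L: "(seglen P Q)^2 = a^2 * (X' - X)^2 + b^2 * (Y' - Y)^2"
    unfolding seglen_sq coords by (simp add: power2_eq_square algebra_simps)
  have "m^2 = k^2 * (seglen P Q)^2"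
    using ratio m by (simp add: power_mult_distrib)
  also have "\<dots> = m * (k^2 * (a^2 * (1 - X * X' + Y * Y') + b^2 * (1 + X * X' - Y * Y')))"
    unfolding L dx dy by (simp add: algebra_simps)
  finally have "m^2 = m * (k^2 * (a^2 * (1 - X * X' + Y * Y') + b^2 * (1 + X * X' - Y * Y')))" .
  then have "m = k^2 * (a^2 * (1 - X * X' + Y * Y') + b^2 * (1 + X * X' - Y * Y'))"
    using \<open>m \<noteq> 0\<close> by (simp add: power2_eq_square)
  then show ?thesis
    unfolding m_def X_def[symmetric] Y_def[symmetric] X'_def[symmetric] Y'_def[symmetric]
    by (simp add: algebra_simps)
qed

lemma unit_circle_relation_complex:
  fixes X Y X' Y' e r :: real
  assumes "X^2 + Y^2 = 1" "X'^2 + Y'^2 = 1"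
  shows "(Complex X Y)^2 + (Complex X' Y')^2 + of_real e * ((Complex X Y)^2 * (Complex X' Y')^2 + 1)
           - 2 * of_real r * Complex X Y * Complex X' Y'
       = 2 * Complex X Y * Complex X' Y' * of_real ((1 + e) * X * X' + (1 - e) * Y * Y' - r)"
  using assms by (simp add: complex_eq_iff power2_eq_square) algebra

lemma unimodular_self_reciprocal_root:
  fixes w :: complex and e c :: real
  assumes "w * cnj w = 1" and "of_real e * w^2 - 2 * of_real c * w + of_real e = 0"
  shows "e * Re w = c"
proof -
  have "(of_real e * w^2 - 2 * of_real c * w + of_real e) * cnj w
      = of_real e * w * (w * cnj w) - 2 * of_real c * (w * cnj w) + of_real e * cnj w"
    by (simp add: algebra_simps power2_eq_square)
  with assms have "Re (of_real e * w - 2 * of_real c + of_real e * cnj w) = 0" by simp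
  then show ?thesis by simp
qed

text \<open>In the variable z = X + iY the relation reads
  z^2 + z'^2 + e (z^2 z'^2 + 1) = 2 r z z', so z2 and z3 are the two roots of a quadratic
  whose coefficients are given by z1; substituting Vieta's formulas into the relation
  between z2 and z3 leaves the factor e^2 - 1 - 2r.\<close>
lemma unit_circle_triangle_closure:
  fixes X1 Y1 X2 Y2 X3 Y3 e r :: real
  assumes c1: "X1^2 + Y1^2 = 1" and c2: "X2^2 + Y2^2 = 1" and c3: "X3^2 + Y3^2 = 1"
    and r12: "(1 + e) * X1 * X2 + (1 - e) * Y1 * Y2 = r"
    and r13: "(1 + e) * X1 * X3 + (1 - e) * Y1 * Y3 = r"
    and r23: "(1 + e) * X2 * X3 + (1 - e) * Y2 * Y3 = r"
    and "(X2, Y2) \<noteq> (X3, Y3)"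
    and nondeg: "e * (X1^2 - Y1^2) \<noteq> r - 1"
  shows "e^2 = 1 + 2 * r"
proof -
  define z1 z2 z3 where "z1 = Complex X1 Y1" and "z2 = Complex X2 Y2" and "z3 = Complex X3 Y3"
  define E R where "E = complex_of_real e" and "R = complex_of_real r"
  define w N where "w = z1^2" and "N = 1 + E * w"
  have p12: "z1^2 + z2^2 + E * (z1^2 * z2^2 + 1) - 2 * R * z1 * z2 = 0"
    using unit_circle_relation_complex[OF c1 c2, of e r] r12 unfolding z1_def z2_def E_def R_def by simp
  have p13: "z1^2 + z3^2 + E * (z1^2 * z3^2 + 1) - 2 * R * z1 * z3 = 0"
    using unit_circle_relation_complex[OF c1 c3, of e r] r13 unfolding z1_def z3_def E_def R_def by simp
  have p23: "z2^2 + z3^2 + E * (z2^2 * z3^2 + 1) - 2 * R * z2 * z3 = 0"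
    using unit_circle_relation_complex[OF c2 c3, of e r] r23 unfolding z2_def z3_def E_def R_def by simp
  have "z2 \<noteq> z3" using \<open>(X2, Y2) \<noteq> (X3, Y3)\<close> unfolding z2_def z3_def by simp
  moreover have "(z2 - z3) * (N * (z2 + z3) - 2 * R * z1) = 0"
  proof -
    have "(z2 - z3) * (N * (z2 + z3) - 2 * R * z1) =
       (z1^2 + z2^2 + E * (z1^2 * z2^2 + 1) - 2 * R * z1 * z2)
       - (z1^2 + z3^2 + E * (z1^2 * z3^2 + 1) - 2 * R * z1 * z3)"
      unfolding N_def w_def by algebra
    with p12 p13 show ?thesis by simp
  qed
  ultimately have sum: "N * (z2 + z3) = 2 * R * z1" by simp
  have "z1^2 + z2^2 + E * (z1^2 * z2^2 + 1) - 2 * R * z1 * z2 = N * z2^2 - (2 * R * z1) * z2 + w + E"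
    unfolding N_def w_def by algebra
  with p12 have "N * z2^2 - (N * (z2 + z3)) * z2 + w + E = 0"
    unfolding sum by simp
  then have prod: "N * (z2 * z3) = w + E" by (simp add: algebra_simps power2_eq_square)
  have "N^2 * (z2^2 + z3^2 + E * (z2^2 * z3^2 + 1) - 2 * R * z2 * z3)
      = (N * (z2 + z3))^2 - 2 * N * (N * (z2 * z3)) + E * ((N * (z2 * z3))^2 + N^2)
        - 2 * R * N * (N * (z2 * z3))"
    by algebra
  also have "\<dots> = (E^2 - 1 - 2 * R) * (E * w^2 - 2 * (R - 1) * w + E)"
    unfolding sum prod unfolding N_def w_def by algebra
  finally have factored: "(E^2 - 1 - 2 * R) * (E * w^2 - 2 * (R - 1) * w + E) = 0"
    using p23 by simp
  have "Re w = X1^2 - Y1^2" "w * cnj w = 1"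
    unfolding w_def z1_def using c1 by (simp_all add: complex_eq_iff power2_eq_square) algebra
  then have "E * w^2 - 2 * (R - 1) * w + E \<noteq> 0"
    using unimodular_self_reciprocal_root[of w e "r - 1"] nondeg unfolding E_def R_def by auto
  with factored have "complex_of_real (e^2 - 1 - 2 * r) = 0" unfolding E_def R_def by simp
  then show ?thesis by (simp only: of_real_eq_0_iff)
qed

lemma ell_delta_sq: "(ell_delta a b)^2 = a^4 - a^2 * b^2 + b^4"
  and ell_delta_nonneg: "ell_delta a b \<ge> 0"
proof -
  have "a^4 - a^2 * b^2 + b^4 = (a^2 - b^2)^2 + (a * b)^2" by algebra
  then have "a^4 - a^2 * b^2 + b^4 \<ge> 0" by simp
  then show "(ell_delta a b)^2 = a^4 - a^2 * b^2 + b^4" "ell_delta a b \<ge> 0"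
    unfolding ell_delta_def by simp_all
qed

text \<open>The square of the ratio of defect to length, common to all sides of all 3-periodics
  (three_periodic_defect_eq).\<close>
definition kappa_sq :: "real \<Rightarrow> real \<Rightarrow> real" where
  "kappa_sq a b = (2 * ell_delta a b - a^2 - b^2) / (a^2 - b^2)^2"

lemma kappa_sq_root:
  assumes "a > b" "b > 0" and "t \<ge> 0"
    and root: "(a^2 - b^2)^2 * t^2 + 2 * (a^2 + b^2) * t - 3 = 0"
  shows "t = kappa_sq a b"
proof -
  define c where "c = (a^2 - b^2)^2"
  have "c > 0" unfolding c_def using assms(1,2) by (simp add: power_strict_mono)
  have "(c * t + (a^2 + b^2))^2 = (2 * ell_delta a b)^2"
    using root ell_delta_sq[of a b] unfolding c_def by algebra
  moreover have "c * t + (a^2 + b^2) \<ge> 0" using \<open>c > 0\<close> \<open>t \<ge> 0\<close> by simp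
  moreover have "2 * ell_delta a b \<ge> 0" using ell_delta_nonneg[of a b] by simp
  ultimately have "c * t + (a^2 + b^2) = 2 * ell_delta a b"
    using power2_eq_iff_nonneg by blast
  then show ?thesis
    unfolding kappa_sq_def c_def[symmetric] using \<open>c > 0\<close> by (simp add: field_simps)
qed

lemma
  assumes "a > b" "b > 0"
  shows kappa_sq_pos: "kappa_sq a b > 0"
    and kappa_sq_less: "kappa_sq a b < 1 / b^2"
    and rho1_kappa_sq: "(1 / b^2 - kappa_sq a b) * rho1 a b = (a^2 - b^2) / (a^2 * b^2)"
proof -
  define d c where "d = ell_delta a b" and "c = a^2 - b^2"
  have d2: "d^2 = a^4 - a^2 * b^2 + b^4" and "d \<ge> 0"
    unfolding d_def by (rule ell_delta_sq, rule ell_delta_nonneg)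
  have "c > 0" unfolding c_def using assms by (simp add: power_strict_mono)
  have "a > 0" "b > 0" using assms by auto
  have kappa: "kappa_sq a b = (2 * d - a^2 - b^2) / c^2" unfolding kappa_sq_def d_def c_def ..
  have "(2 * d)^2 - (a^2 + b^2)^2 = 3 * c^2" using d2 unfolding c_def by algebra
  moreover have "c^2 > 0" using \<open>c > 0\<close> by simp
  ultimately have "(a^2 + b^2)^2 < (2 * d)^2" by linarith
  from power_less_imp_less_base[OF this] have "a^2 + b^2 < 2 * d" using \<open>d \<ge> 0\<close> by simp
  then show "kappa_sq a b > 0" unfolding kappa using \<open>c > 0\<close> by simp
  have "d^2 - (b^2)^2 = a^2 * c" using d2 unfolding c_def by algebra
  moreover have "a^2 * c > 0" using \<open>c > 0\<close> \<open>a > 0\<close> by simp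
  ultimately have "(b^2)^2 < d^2" by linarith
  from power_less_imp_less_base[OF this] have "b^2 < d" using \<open>d \<ge> 0\<close> by simp
  have gap: "c^2 * (1 - b^2 * kappa_sq a b) = (d - b^2)^2"
    unfolding kappa using \<open>c > 0\<close> d2 unfolding c_def by (simp add: field_simps) algebra
  then have "1 - b^2 * kappa_sq a b > 0"
    using \<open>b^2 < d\<close> \<open>c > 0\<close> by (smt (verit) mult_nonneg_nonpos zero_less_power)
  then show "kappa_sq a b < 1 / b^2" using \<open>b > 0\<close> by (simp add: field_simps)
  have "c^2 * ((1 - b^2 * kappa_sq a b) * (b^2 + d)^2) = (d - b^2)^2 * (b^2 + d)^2"
    by (simp only: mult.assoc[symmetric] gap)
  also have "\<dots> = c^2 * a^4" using d2 unfolding c_def by algebra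
  finally have a4: "(1 - b^2 * kappa_sq a b) * (b^2 + d)^2 = a^4" using \<open>c > 0\<close> by simp
  have "(1 / b^2 - kappa_sq a b) * rho1 a b = (1 - b^2 * kappa_sq a b) * (b^2 + d)^2 * c / (a^6 * b^2)"
    unfolding rho1_def c_def d_def using \<open>b > 0\<close> by (simp add: field_simps)
  also have "\<dots> = c / (a^2 * b^2)"
    unfolding a4 using \<open>a > 0\<close> \<open>b > 0\<close> by (simp add: eval_nat_numeral field_simps)
  finally show "(1 / b^2 - kappa_sq a b) * rho1 a b = (a^2 - b^2) / (a^2 * b^2)" unfolding c_def .
qed

lemma three_periodic_ratio_quadratic:
  assumes ab: "a > b" "b > 0" and tp: "three_periodic a b P1 P2 P3" and "k > 0"
    and k: "ell_defect a b P1 P2 = k * seglen P1 P2"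
      "ell_defect a b P1 P3 = k * seglen P1 P3" "ell_defect a b P2 P3 = k * seglen P2 P3"
  shows "(a^2 - b^2)^2 * (k^2)^2 + 2 * (a^2 + b^2) * k^2 - 3 = 0"
proof -
  have "a > 0" using ab by simp
  have on: "on_ellipse a b P1" "on_ellipse a b P2" "on_ellipse a b P3"
    and "signed_area2 P1 P2 P3 \<noteq> 0"
    using tp unfolding three_periodic_def by auto
  then have ne: "P1 \<noteq> P2" "P1 \<noteq> P3" "P2 \<noteq> P3"
    using signed_area2_nonzero_imp_distinct by auto
  define X Y where "X P = fst P / a" and "Y P = snd P / b" for P
  define e r where "e = k^2 * (b^2 - a^2)" and "r = 1 - k^2 * (a^2 + b^2)"
  have circ: "X P^2 + Y P^2 = 1" if "on_ellipse a b P" for P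
    using that unfolding on_ellipse_def X_def Y_def by (simp add: power_divide)
  have rel: "(1 + e) * X P * X Q + (1 - e) * Y P * Y Q = r"
    if "on_ellipse a b P" "on_ellipse a b Q" "P \<noteq> Q" "ell_defect a b P Q = k * seglen P Q" for P Q
    using defect_ratio_imp_circle_relation[OF \<open>a > 0\<close> \<open>b > 0\<close> that] unfolding X_def Y_def e_def r_def .
  have "(X P2, Y P2) \<noteq> (X P3, Y P3)"
    using ne(3) \<open>a > 0\<close> \<open>b > 0\<close> unfolding X_def Y_def by (auto simp: prod_eq_iff)
  moreover have "e * (X P1^2 - Y P1^2) \<noteq> r - 1"
  proof
    assume "e * (X P1^2 - Y P1^2) = r - 1"
    then have "k^2 * ((a^2 - b^2) * (X P1^2 - Y P1^2)) = k^2 * (a^2 + b^2)"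
      unfolding e_def r_def by (simp add: algebra_simps)
    then have "(a^2 - b^2) * (X P1^2 - Y P1^2) = a^2 + b^2" using \<open>k > 0\<close> by simp
    moreover have "X P1^2 - Y P1^2 \<le> 1" using circ[OF on(1)] by (smt (verit) zero_le_power2)
    moreover have "a^2 - b^2 > 0" "b^2 > 0" using ab by (simp_all add: power_strict_mono)
    ultimately show False by (smt (verit) mult_left_le)
  qed
  ultimately have "e^2 = 1 + 2 * r"
    using unit_circle_triangle_closure circ[OF on(1)] circ[OF on(2)] circ[OF on(3)]
      rel[OF on(1,2) ne(1) k(1)] rel[OF on(1,3) ne(2) k(2)] rel[OF on(2,3) ne(3) k(3)]
    by blast
  then show ?thesis unfolding e_def r_def by (simp add: power2_eq_square algebra_simps)
qed

lemma three_periodic_defect_eq: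
  assumes ab: "a > b" "b > 0" and tp: "three_periodic a b P1 P2 P3"
  shows "ell_defect a b P1 P2 = sqrt (kappa_sq a b) * seglen P1 P2"
    and "ell_defect a b P1 P3 = sqrt (kappa_sq a b) * seglen P1 P3"
    and "ell_defect a b P2 P3 = sqrt (kappa_sq a b) * seglen P2 P3"
proof -
  obtain k where "k > 0" and k: "ell_defect a b P1 P2 = k * seglen P1 P2"
    "ell_defect a b P1 P3 = k * seglen P1 P3" "ell_defect a b P2 P3 = k * seglen P2 P3"
    using three_periodic_common_ratio[OF _ \<open>b > 0\<close> tp] ab by auto
  from three_periodic_ratio_quadratic[OF ab tp \<open>k > 0\<close> k]
  have "k^2 = kappa_sq a b" using kappa_sq_root[OF ab] by simp
  then have "k = sqrt (kappa_sq a b)" using \<open>k > 0\<close> by (metis abs_of_pos real_sqrt_abs)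
  with k show "ell_defect a b P1 P2 = sqrt (kappa_sq a b) * seglen P1 P2"
    and "ell_defect a b P1 P3 = sqrt (kappa_sq a b) * seglen P1 P3"
    and "ell_defect a b P2 P3 = sqrt (kappa_sq a b) * seglen P2 P3" by simp_all
qed

section \<open>Sides through a vertex\<close>

definition normal_sq :: "real \<Rightarrow> real \<Rightarrow> pt \<Rightarrow> real" where
  "normal_sq a b P = (fst P / a^2)^2 + (snd P / b^2)^2"

definition normal_cross :: "real \<Rightarrow> real \<Rightarrow> pt \<Rightarrow> pt \<Rightarrow> real" where
  "normal_cross a b P Q =
     (fst P / a^2 * (snd Q - snd P) - snd P / b^2 * (fst Q - fst P)) / seglen P Q"

definition vertex_alpha :: "real \<Rightarrow> real \<Rightarrow> real \<Rightarrow> pt \<Rightarrow> real" where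
  "vertex_alpha a b k P = k^2 * ((fst P / a^2)^2 / a^2 + (snd P / b^2)^2 / b^2)
     + (normal_sq a b P - k^2) / (a^2 * b^2)"

definition vertex_beta :: "real \<Rightarrow> real \<Rightarrow> real \<Rightarrow> pt \<Rightarrow> real" where
  "vertex_beta a b k P = 2 * k * (fst P / a^2) * (snd P / b^2) * (a^2 - b^2) / (a^2 * b^2)"

lemma chord_normal_cross_sq:
  assumes "P \<noteq> Q" "on_ellipse a b P" and ratio: "ell_defect a b P Q = k * seglen P Q"
  shows "(normal_cross a b P Q)^2 = normal_sq a b P - k^2"
proof -
  define nx ny dx dy where "nx = fst P / a^2" and "ny = snd P / b^2"
    and "dx = fst Q - fst P" and "dy = snd Q - snd P"
  define L where "L = seglen P Q"
  have "L > 0" using seglen_pos[OF \<open>P \<noteq> Q\<close>] unfolding L_def .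
  have nd: "nx * dx + ny * dy = - k * L"
    using normal_dot_chord[OF \<open>on_ellipse a b P\<close>, of Q] ratio
    unfolding nx_def ny_def dx_def dy_def L_def by simp
  have "L^2 = dx^2 + dy^2" unfolding L_def dx_def dy_def by (rule seglen_sq)
  then have "(nx^2 + ny^2) * L^2 = (nx * dx + ny * dy)^2 + (nx * dy - ny * dx)^2"
    by algebra
  then have "(nx * dy - ny * dx)^2 = L^2 * (nx^2 + ny^2 - k^2)"
    unfolding nd by (simp add: algebra_simps power_mult_distrib)
  with \<open>L > 0\<close> show ?thesis
    unfolding normal_cross_def normal_sq_def nx_def[symmetric] ny_def[symmetric]
      dx_def[symmetric] dy_def[symmetric] L_def[symmetric] by (simp add: power_divide)
qed

text \<open>Decomposing the chord along the normal and the tangent at P and inserting it into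
  the ellipse norm, which equals 2 k L by the defect relation, gives a linear equation
  for the chord length L.\<close>
lemma chord_length_eq:
  assumes ab: "a > 0" "b > 0" and "P \<noteq> Q" and on: "on_ellipse a b P" "on_ellipse a b Q"
    and ratio: "ell_defect a b P Q = k * seglen P Q"
  shows "seglen P Q * (vertex_alpha a b k P - vertex_beta a b k P * normal_cross a b P Q)
       = 2 * k * (normal_sq a b P)^2"
proof -
  define nx ny dx dy where "nx = fst P / a^2" and "ny = snd P / b^2"
    and "dx = fst Q - fst P" and "dy = snd Q - snd P"
  define L N \<omega> where "L = seglen P Q" and "N = normal_sq a b P" and "\<omega> = normal_cross a b P Q"
  have "L > 0" using seglen_pos[OF \<open>P \<noteq> Q\<close>] unfolding L_def .
  have nd: "nx * dx + ny * dy = - k * L"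
    using normal_dot_chord[OF on(1), of Q] ratio
    unfolding nx_def ny_def dx_def dy_def L_def by simp
  have w: "nx * dy - ny * dx = \<omega> * L"
    using \<open>L > 0\<close> unfolding \<omega>_def normal_cross_def nx_def ny_def dx_def dy_def L_def by simp
  have N: "N = nx^2 + ny^2" unfolding N_def normal_sq_def nx_def ny_def ..
  have "ny^2 / a^2 + nx^2 / b^2 = ((fst P)^2 / a^2 + (snd P)^2 / b^2) / (a^2 * b^2)"
    unfolding nx_def ny_def using ab by (simp add: power_divide field_simps eval_nat_numeral)
  then have tangential: "ny^2 / a^2 + nx^2 / b^2 = 1 / (a^2 * b^2)"
    using on(1) unfolding on_ellipse_def by simp
  have "2 * k * L = dx^2 / a^2 + dy^2 / b^2"
    using two_ell_defect_eq[OF on] ratio unfolding dx_def dy_def L_def by simp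
  then have "N^2 * (2 * k * L) = (N * dx)^2 / a^2 + (N * dy)^2 / b^2"
    by (simp add: power_mult_distrib distrib_left)
  also have "\<dots> = ((nx * dx + ny * dy) * nx - (nx * dy - ny * dx) * ny)^2 / a^2
                 + ((nx * dx + ny * dy) * ny + (nx * dy - ny * dx) * nx)^2 / b^2"
    unfolding N by algebra
  also have "\<dots> = L^2 * ((k * nx + \<omega> * ny)^2 / a^2 + (k * ny - \<omega> * nx)^2 / b^2)"
    unfolding nd w by (simp add: power2_eq_square algebra_simps add_divide_distrib)
  also have "(k * nx + \<omega> * ny)^2 / a^2 + (k * ny - \<omega> * nx)^2 / b^2
      = k^2 * (nx^2 / a^2 + ny^2 / b^2) + \<omega>^2 * (ny^2 / a^2 + nx^2 / b^2)
        - 2 * k * \<omega> * nx * ny * (a^2 - b^2) / (a^2 * b^2)"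
    using ab by (simp add: field_simps) algebra
  also have "\<dots> = vertex_alpha a b k P - vertex_beta a b k P * \<omega>"
    unfolding tangential \<omega>_def chord_normal_cross_sq[OF \<open>P \<noteq> Q\<close> on(1) ratio]
      vertex_alpha_def vertex_beta_def nx_def[symmetric] ny_def[symmetric] N_def[symmetric]
    by (simp add: algebra_simps)
  finally have "L * (2 * k * N^2) = L * (L * (vertex_alpha a b k P - vertex_beta a b k P * \<omega>))"
    by (simp add: power2_eq_square algebra_simps)
  with \<open>L > 0\<close> show ?thesis unfolding L_def N_def \<omega>_def by simp
qed

lemma seglen_sq_cosines:
  "(seglen Q R)^2 = (seglen P Q)^2 + (seglen P R)^2
     - 2 * ((fst Q - fst P) * (fst R - fst P) + (snd Q - snd P) * (snd R - snd P))"
  unfolding seglen_sq by (simp add: power2_eq_square algebra_simps)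

lemma normal_sq_pos:
  assumes "on_ellipse a b P"
  shows "normal_sq a b P > 0"
proof (rule ccontr)
  assume "\<not> normal_sq a b P > 0"
  then have "fst P / a^2 = 0" "snd P / b^2 = 0"
    unfolding normal_sq_def by (smt (verit) sum_power2_eq_zero_iff zero_le_power2)+
  then have "(fst P)^2 / a^2 = 0" "(snd P)^2 / b^2 = 0"
    by (simp_all add: power2_eq_square)
  with assms show False unfolding on_ellipse_def by simp
qed

lemma two_chords_area_dot:
  assumes on: "on_ellipse a b P" and "P \<noteq> Q" "P \<noteq> R"
    and ratio: "ell_defect a b P Q = k * seglen P Q" "ell_defect a b P R = k * seglen P R"
  shows "normal_sq a b P * signed_area2 P Q R
           = k * seglen P Q * seglen P R * (normal_cross a b P Q - normal_cross a b P R)"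
    and "normal_sq a b P * ((fst Q - fst P) * (fst R - fst P) + (snd Q - snd P) * (snd R - snd P))
           = seglen P Q * seglen P R * (k^2 + normal_cross a b P Q * normal_cross a b P R)"
proof -
  define nx ny where "nx = fst P / a^2" and "ny = snd P / b^2"
  define qx qy rx ry where "qx = fst Q - fst P" and "qy = snd Q - snd P"
    and "rx = fst R - fst P" and "ry = snd R - snd P"
  define LQ LR where "LQ = seglen P Q" and "LR = seglen P R"
  have "LQ > 0" "LR > 0" using seglen_pos \<open>P \<noteq> Q\<close> \<open>P \<noteq> R\<close> unfolding LQ_def LR_def by auto
  have dot: "nx * qx + ny * qy = - k * LQ" "nx * rx + ny * ry = - k * LR"
    using normal_dot_chord[OF on, of Q] normal_dot_chord[OF on, of R] ratio
    unfolding nx_def ny_def qx_def qy_def rx_def ry_def LQ_def LR_def by simp_all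
  have cross: "nx * qy - ny * qx = normal_cross a b P Q * LQ" "nx * ry - ny * rx = normal_cross a b P R * LR"
    using \<open>LQ > 0\<close> \<open>LR > 0\<close>
    unfolding normal_cross_def nx_def ny_def qx_def qy_def rx_def ry_def LQ_def LR_def by simp_all
  have N: "normal_sq a b P = nx^2 + ny^2" unfolding normal_sq_def nx_def ny_def ..
  have "normal_sq a b P * signed_area2 P Q R
      = (nx * qx + ny * qy) * (nx * ry - ny * rx) - (nx * qy - ny * qx) * (nx * rx + ny * ry)"
    unfolding N signed_area2_def qx_def qy_def rx_def ry_def by algebra
  then show "normal_sq a b P * signed_area2 P Q R
           = k * seglen P Q * seglen P R * (normal_cross a b P Q - normal_cross a b P R)"
    unfolding dot cross LQ_def LR_def by (simp add: algebra_simps)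
  have "normal_sq a b P * (qx * rx + qy * ry)
      = (nx * qx + ny * qy) * (nx * rx + ny * ry) + (nx * qy - ny * qx) * (nx * ry - ny * rx)"
    unfolding N by algebra
  also have "\<dots> = LQ * LR * (k^2 + normal_cross a b P Q * normal_cross a b P R)"
    unfolding dot cross by (simp add: algebra_simps power2_eq_square)
  finally show "normal_sq a b P * ((fst Q - fst P) * (fst R - fst P) + (snd Q - snd P) * (snd R - snd P))
           = seglen P Q * seglen P R * (k^2 + normal_cross a b P Q * normal_cross a b P R)"
    unfolding qx_def qy_def rx_def ry_def LQ_def LR_def .
qed

lemma three_periodic_vertex_identities:
  assumes ab: "a > b" "b > 0" and tp: "three_periodic a b P1 P2 P3"
  shows "normal_cross a b P1 P3 = - normal_cross a b P1 P2"
    and "(normal_cross a b P1 P2)^2 = normal_sq a b P1 - kappa_sq a b"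
    and "normal_sq a b P1 * signed_area2 P1 P2 P3
           = 2 * sqrt (kappa_sq a b) * seglen P1 P2 * seglen P1 P3 * normal_cross a b P1 P2"
    and "normal_sq a b P1 * ((fst P2 - fst P1) * (fst P3 - fst P1) + (snd P2 - snd P1) * (snd P3 - snd P1))
           = seglen P1 P2 * seglen P1 P3 * (2 * kappa_sq a b - normal_sq a b P1)"
proof -
  have on: "on_ellipse a b P1" and area: "signed_area2 P1 P2 P3 \<noteq> 0"
    using tp unfolding three_periodic_def by auto
  then have ne: "P1 \<noteq> P2" "P1 \<noteq> P3" using signed_area2_nonzero_imp_distinct by auto
  note ratio = three_periodic_defect_eq[OF ab tp]
  have "sqrt (kappa_sq a b)^2 = kappa_sq a b" using kappa_sq_pos[OF ab] by simp
  then have sq: "(normal_cross a b P1 P2)^2 = normal_sq a b P1 - kappa_sq a b"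
    "(normal_cross a b P1 P3)^2 = normal_sq a b P1 - kappa_sq a b"
    using chord_normal_cross_sq[OF ne(1) on ratio(1)] chord_normal_cross_sq[OF ne(2) on ratio(2)]
    by simp_all
  then show "(normal_cross a b P1 P2)^2 = normal_sq a b P1 - kappa_sq a b" by simp
  note area_eq = two_chords_area_dot(1)[OF on ne ratio(1,2)]
  have "normal_cross a b P1 P3 \<noteq> normal_cross a b P1 P2"
    using area_eq area normal_sq_pos[OF on] by auto
  with sq show opp: "normal_cross a b P1 P3 = - normal_cross a b P1 P2"
    by (metis power2_eq_iff)
  show "normal_sq a b P1 * signed_area2 P1 P2 P3
           = 2 * sqrt (kappa_sq a b) * seglen P1 P2 * seglen P1 P3 * normal_cross a b P1 P2"
    using area_eq unfolding opp by simp
  show "normal_sq a b P1 * ((fst P2 - fst P1) * (fst P3 - fst P1) + (snd P2 - snd P1) * (snd P3 - snd P1))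
           = seglen P1 P2 * seglen P1 P3 * (2 * kappa_sq a b - normal_sq a b P1)"
    using two_chords_area_dot(2)[OF on ne ratio(1,2)] \<open>sqrt (kappa_sq a b)^2 = kappa_sq a b\<close> sq(1)
    unfolding opp by (simp add: power2_eq_square)
qed

lemma three_periodic_side_lengths:
  assumes ab: "a > b" "b > 0" and tp: "three_periodic a b P1 P2 P3"
  defines "t \<equiv> kappa_sq a b" and "N \<equiv> normal_sq a b P1" and "\<omega> \<equiv> normal_cross a b P1 P2"
    and "\<alpha> \<equiv> vertex_alpha a b (sqrt (kappa_sq a b)) P1"
    and "\<beta> \<equiv> vertex_beta a b (sqrt (kappa_sq a b)) P1"
    and "D \<equiv> (vertex_alpha a b (sqrt (kappa_sq a b)) P1)^2
              - (vertex_beta a b (sqrt (kappa_sq a b)) P1)^2 * (normal_sq a b P1 - kappa_sq a b)"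
  shows "D^2 * (seglen P1 P2)^2 = 4 * t * N^4 * (\<alpha>^2 + \<beta>^2 * (N - t)) + 8 * t * N^4 * \<alpha> * \<beta> * \<omega>"
    and "D^2 * (seglen P1 P3)^2 = 4 * t * N^4 * (\<alpha>^2 + \<beta>^2 * (N - t)) - 8 * t * N^4 * \<alpha> * \<beta> * \<omega>"
    and "D^2 * (seglen P2 P3)^2 = 8 * t * N^4 * (\<alpha>^2 + \<beta>^2 * (N - t)) - 8 * t * N^3 * (2 * t - N) * D"
proof -
  define k where "k = sqrt t"
  have "a > 0" using ab by simp
  have on: "on_ellipse a b P1" "on_ellipse a b P2" "on_ellipse a b P3"
    and "signed_area2 P1 P2 P3 \<noteq> 0"
    using tp unfolding three_periodic_def by auto
  then have ne: "P1 \<noteq> P2" "P1 \<noteq> P3" using signed_area2_nonzero_imp_distinct by auto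
  have k2: "k^2 = t" unfolding k_def t_def using kappa_sq_pos[OF ab] by simp
  note ratio = three_periodic_defect_eq[OF ab tp, folded t_def k_def]
  note vertex = three_periodic_vertex_identities[OF ab tp, folded t_def N_def \<omega>_def]
  have D: "D = (\<alpha> - \<beta> * \<omega>) * (\<alpha> + \<beta> * \<omega>)"
    unfolding D_def \<alpha>_def[symmetric] \<beta>_def[symmetric]
    unfolding t_def[symmetric] N_def[symmetric] vertex(2)[symmetric]
    by (simp add: algebra_simps power2_eq_square)
  have L2: "seglen P1 P2 * (\<alpha> - \<beta> * \<omega>) = 2 * k * N^2"
    using chord_length_eq[OF \<open>a > 0\<close> \<open>b > 0\<close> ne(1) on(1,2) ratio(1)]
    unfolding \<alpha>_def \<beta>_def N_def \<omega>_def k_def t_def .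
  have DL2: "D * seglen P1 P2 = 2 * k * N^2 * (\<alpha> + \<beta> * \<omega>)"
    unfolding D L2[symmetric] by (simp add: algebra_simps)
  have L3: "seglen P1 P3 * (\<alpha> + \<beta> * \<omega>) = 2 * k * N^2"
    using chord_length_eq[OF \<open>a > 0\<close> \<open>b > 0\<close> ne(2) on(1,3) ratio(2)]
    unfolding \<alpha>_def \<beta>_def N_def vertex(1) \<omega>_def k_def t_def by simp
  have DL3: "D * seglen P1 P3 = 2 * k * N^2 * (\<alpha> - \<beta> * \<omega>)"
    unfolding D L3[symmetric] by (simp add: algebra_simps)
  have square: "(2 * k * N^2 * (\<alpha> + s * \<beta> * \<omega>))^2
      = 4 * t * N^4 * (\<alpha>^2 + \<beta>^2 * (N - t)) + s * (8 * t * N^4 * \<alpha> * \<beta> * \<omega>)"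
    if "s^2 = 1" for s
  proof -
    have "(2 * k * N^2 * (\<alpha> + s * \<beta> * \<omega>))^2
        = 4 * k^2 * N^4 * (\<alpha>^2 + s^2 * \<beta>^2 * \<omega>^2) + s * (8 * k^2 * N^4 * \<alpha> * \<beta> * \<omega>)"
      by algebra
    then show ?thesis unfolding k2 that vertex(2) by simp
  qed
  show side2: "D^2 * (seglen P1 P2)^2 = 4 * t * N^4 * (\<alpha>^2 + \<beta>^2 * (N - t)) + 8 * t * N^4 * \<alpha> * \<beta> * \<omega>"
    using square[of 1] unfolding power_mult_distrib[symmetric] DL2 by simp
  show side3: "D^2 * (seglen P1 P3)^2 = 4 * t * N^4 * (\<alpha>^2 + \<beta>^2 * (N - t)) - 8 * t * N^4 * \<alpha> * \<beta> * \<omega>"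
    using square[of "-1"] unfolding power_mult_distrib[symmetric] DL3 by simp
  define dot where "dot = (fst P2 - fst P1) * (fst P3 - fst P1) + (snd P2 - snd P1) * (snd P3 - snd P1)"
  have "N * (D^2 * dot) = D^2 * (N * dot)" by (simp add: algebra_simps)
  also have "\<dots> = (D * seglen P1 P2) * (D * seglen P1 P3) * (2 * t - N)"
    unfolding vertex(4)[folded dot_def] by (simp add: algebra_simps power2_eq_square)
  also have "\<dots> = 4 * k^2 * N^4 * ((\<alpha> - \<beta> * \<omega>) * (\<alpha> + \<beta> * \<omega>)) * (2 * t - N)"
    unfolding DL2 DL3 by (simp add: algebra_simps power2_eq_square power4_eq_xxxx)
  also have "\<dots> = N * (4 * t * N^3 * D * (2 * t - N))"
    unfolding D[symmetric] k2 by (simp add: algebra_simps power3_eq_cube power4_eq_xxxx)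
  finally have D2_dot: "D^2 * dot = 4 * t * N^3 * D * (2 * t - N)"
    using normal_sq_pos[OF on(1)] unfolding N_def by simp
  have "D^2 * (seglen P2 P3)^2 = D^2 * (seglen P1 P2)^2 + D^2 * (seglen P1 P3)^2 - 2 * (D^2 * dot)"
    unfolding seglen_sq_cosines[of P2 P3 P1, folded dot_def] by (simp add: algebra_simps)
  then show "D^2 * (seglen P2 P3)^2 = 8 * t * N^4 * (\<alpha>^2 + \<beta>^2 * (N - t)) - 8 * t * N^3 * (2 * t - N) * D"
    unfolding side2 side3 D2_dot by simp
qed

lemma three_periodic_normal_cross_sign:
  assumes ab: "a > b" "b > 0" and tp: "three_periodic a b P1 P2 P3"
    and \<sigma>: "\<sigma> \<in> {-1, 1}" and orient: "\<sigma> * signed_area2 P1 P2 P3 > 0"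
  shows "normal_cross a b P1 P2 = \<sigma> * sqrt (normal_sq a b P1 - kappa_sq a b)"
proof -
  have on: "on_ellipse a b P1" and "signed_area2 P1 P2 P3 \<noteq> 0"
    using tp unfolding three_periodic_def by auto
  then have "P1 \<noteq> P2" "P1 \<noteq> P3" using signed_area2_nonzero_imp_distinct by auto
  then have pos: "0 < normal_sq a b P1" "0 < 2 * sqrt (kappa_sq a b) * seglen P1 P2 * seglen P1 P3"
    using normal_sq_pos[OF on] kappa_sq_pos[OF ab] seglen_pos by simp_all
  have "0 < normal_sq a b P1 * (\<sigma> * signed_area2 P1 P2 P3)"
    using pos(1) orient by simp
  then have "0 < (2 * sqrt (kappa_sq a b) * seglen P1 P2 * seglen P1 P3) * (\<sigma> * normal_cross a b P1 P2)"
    unfolding mult.left_commute[of _ \<sigma>] three_periodic_vertex_identities(3)[OF ab tp]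
    by (simp add: algebra_simps)
  then have "\<sigma> * normal_cross a b P1 P2 > 0" using pos(2) zero_less_mult_pos by blast
  moreover have "sqrt (normal_sq a b P1 - kappa_sq a b) = \<bar>normal_cross a b P1 P2\<bar>"
    unfolding three_periodic_vertex_identities(2)[OF ab tp, symmetric] by (rule real_sqrt_abs)
  ultimately show ?thesis using \<sigma> by auto
qed

section \<open>Polynomials in the parameter u\<close>

context
  fixes a b :: real
begin

definition normal_sq_poly :: "real poly" where
  "normal_sq_poly = [:1 / b^2, 0, 1 / a^2 - 1 / b^2:]"

definition alpha_poly :: "real poly" where
  "alpha_poly = smult (kappa_sq a b) [:1 / b^4, 0, 1 / a^4 - 1 / b^4:]
     + smult (1 / (a^2 * b^2)) (normal_sq_poly - [:kappa_sq a b:])"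

definition beta_sq_poly :: "real poly" where
  "beta_sq_poly = smult (4 * kappa_sq a b * (a^2 - b^2)^2 / (a^6 * b^6)) [:0, 0, 1, 0, -1:]
     * (normal_sq_poly - [:kappa_sq a b:])"

definition disc_poly :: "real poly" where
  "disc_poly = alpha_poly^2 - beta_sq_poly"

definition side_even_poly :: "real poly" where
  "side_even_poly = smult (4 * kappa_sq a b) (normal_sq_poly^4 * (alpha_poly^2 + beta_sq_poly))"

definition side_odd_poly :: "real poly" where
  "side_odd_poly = smult (16 * kappa_sq a b * sqrt (kappa_sq a b) * sqrt (1 / b^2 - kappa_sq a b)
       * ((a^2 - b^2) / (a^3 * b^3))) (normal_sq_poly^4 * alpha_poly * [:0, 1:])"

definition opposite_side_poly :: "real poly" where
  "opposite_side_poly = smult 2 side_even_poly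
     - smult (8 * kappa_sq a b) (normal_sq_poly^3 * ([:2 * kappa_sq a b:] - normal_sq_poly) * disc_poly)"

end

lemma vertex_coeffs_at_param:
  assumes ab: "a > b" "b > 0" and u1: "u1^2 = 1 - u^2"
  defines "P \<equiv> (a * u, b * u1)"
  shows "normal_sq a b P = poly (normal_sq_poly a b) u"
    and "normal_sq a b P - kappa_sq a b = (1 / b^2 - kappa_sq a b) * (1 - rho1 a b * u^2)"
    and "vertex_alpha a b (sqrt (kappa_sq a b)) P = poly (alpha_poly a b) u"
    and "vertex_beta a b (sqrt (kappa_sq a b)) P
           = 2 * sqrt (kappa_sq a b) * ((a^2 - b^2) / (a^3 * b^3)) * u * u1"
    and "(vertex_beta a b (sqrt (kappa_sq a b)) P)^2 * (normal_sq a b P - kappa_sq a b)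
           = poly (beta_sq_poly a b) u"
proof -
  have "a > 0" using ab by simp
  have k2: "sqrt (kappa_sq a b)^2 = kappa_sq a b" using kappa_sq_pos[OF ab] by simp
  show N: "normal_sq a b P = poly (normal_sq_poly a b) u"
    unfolding normal_sq_def normal_sq_poly_def P_def using \<open>a > 0\<close> \<open>b > 0\<close>
    by (simp add: power_mult_distrib power_divide u1 field_simps) algebra
  show "normal_sq a b P - kappa_sq a b = (1 / b^2 - kappa_sq a b) * (1 - rho1 a b * u^2)"
    unfolding N normal_sq_poly_def using rho1_kappa_sq[OF ab] \<open>a > 0\<close> \<open>b > 0\<close>
    by (simp add: field_simps) algebra
  show "vertex_alpha a b (sqrt (kappa_sq a b)) P = poly (alpha_poly a b) u"
    unfolding vertex_alpha_def N alpha_poly_def k2 using \<open>a > 0\<close> \<open>b > 0\<close>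
    by (simp add: P_def power_mult_distrib power_divide u1 field_simps) algebra
  show beta: "vertex_beta a b (sqrt (kappa_sq a b)) P
           = 2 * sqrt (kappa_sq a b) * ((a^2 - b^2) / (a^3 * b^3)) * u * u1"
    unfolding vertex_beta_def P_def using \<open>a > 0\<close> \<open>b > 0\<close>
    by (simp add: field_simps eval_nat_numeral)
  show "(vertex_beta a b (sqrt (kappa_sq a b)) P)^2 * (normal_sq a b P - kappa_sq a b)
           = poly (beta_sq_poly a b) u"
  proof -
    have beta_sq: "(vertex_beta a b (sqrt (kappa_sq a b)) P)^2
        = 4 * kappa_sq a b * (a^2 - b^2)^2 / (a^6 * b^6) * (u^2 * (1 - u^2))"
      unfolding beta by (simp add: power_mult_distrib power_divide k2 u1 flip: power_mult)
    have "poly [:0, 0, 1, 0, -1:] u = u^2 * (1 - u^2)"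
      by (simp add: algebra_simps power2_eq_square)
    then have "poly (beta_sq_poly a b) u
        = 4 * kappa_sq a b * (a^2 - b^2)^2 / (a^6 * b^6) * (u^2 * (1 - u^2))
          * (poly (normal_sq_poly a b) u - kappa_sq a b)"
      unfolding beta_sq_poly_def poly_mult poly_smult poly_diff by simp
    then show ?thesis unfolding beta_sq N by simp
  qed
qed

lemma three_periodic_normal_cross_at_param:
  assumes ab: "a > b" "b > 0" and u: "u \<in> {-1<..<1}"
    and tp: "three_periodic a b (a * u, b * sqrt (1 - u^2)) P2 P3"
    and \<sigma>: "\<sigma> \<in> {-1, 1}" and orient: "\<sigma> * signed_area2 (a * u, b * sqrt (1 - u^2)) P2 P3 > 0"
  shows "normal_cross a b (a * u, b * sqrt (1 - u^2)) P2
           = \<sigma> * sqrt (1 / b^2 - kappa_sq a b) * sqrt (1 - rho1 a b * u^2)"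
proof -
  have "u^2 < 1" using u by (simp add: abs_square_less_1 abs_less_iff)
  then have "(sqrt (1 - u^2))^2 = 1 - u^2" by simp
  note gap = vertex_coeffs_at_param(2)[OF ab this]
  have "normal_sq a b (a * u, b * sqrt (1 - u^2)) - kappa_sq a b \<ge> 0"
    using three_periodic_vertex_identities(2)[OF ab tp] by (metis zero_le_power2)
  then have "1 - rho1 a b * u^2 \<ge> 0"
    using kappa_sq_less[OF ab] unfolding gap by (simp add: zero_le_mult_iff)
  then show ?thesis
    using three_periodic_normal_cross_sign[OF ab tp \<sigma> orient] unfolding gap
    by (simp add: real_sqrt_mult)
qed

lemma three_periodic_param_side_lengths:
  assumes ab: "a > b" "b > 0" and u: "u \<in> {-1<..<1}"
    and tp: "three_periodic a b (a * u, b * sqrt (1 - u^2)) P2 P3"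
    and \<sigma>: "\<sigma> \<in> {-1, 1}" and orient: "\<sigma> * signed_area2 (a * u, b * sqrt (1 - u^2)) P2 P3 > 0"
  defines "u1 \<equiv> sqrt (1 - u^2)" and "u2 \<equiv> sqrt (1 - rho1 a b * u^2)"
  shows "poly (disc_poly a b ^ 2) u * (seglen (a * u, b * u1) P2)^2
           = poly (side_even_poly a b) u + \<sigma> * poly (side_odd_poly a b) u * u1 * u2"
    and "poly (disc_poly a b ^ 2) u * (seglen (a * u, b * u1) P3)^2
           = poly (side_even_poly a b) u - \<sigma> * poly (side_odd_poly a b) u * u1 * u2"
    and "poly (disc_poly a b ^ 2) u * (seglen P2 P3)^2 = poly (opposite_side_poly a b) u"
proof -
  define P1 t k where "P1 = (a * u, b * u1)" and "t = kappa_sq a b" and "k = sqrt (kappa_sq a b)"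
  define N \<omega> \<alpha> \<beta> where "N = normal_sq a b P1" and "\<omega> = normal_cross a b P1 P2"
    and "\<alpha> = vertex_alpha a b k P1" and "\<beta> = vertex_beta a b k P1"
  have tp1: "three_periodic a b P1 P2 P3" using tp unfolding P1_def u1_def .
  have "u^2 < 1" using u by (simp add: abs_square_less_1 abs_less_iff)
  then have "u1^2 = 1 - u^2" unfolding u1_def by simp
  note coeffs = vertex_coeffs_at_param[OF ab this, folded P1_def k_def, folded t_def N_def \<alpha>_def \<beta>_def]
  note sides = three_periodic_side_lengths[OF ab tp1, folded k_def, folded t_def N_def \<omega>_def \<alpha>_def \<beta>_def]
  have \<omega>: "\<omega> = \<sigma> * sqrt (1 / b^2 - t) * u2"
    using three_periodic_normal_cross_at_param[OF ab u tp \<sigma> orient]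
    unfolding \<omega>_def P1_def u1_def u2_def t_def .
  define C where "C = (a^2 - b^2) / (a^3 * b^3)"
  have odd: "8 * t * N^4 * \<alpha> * \<beta> * \<omega> = \<sigma> * poly (side_odd_poly a b) u * u1 * u2"
    unfolding \<omega> coeffs(4) side_odd_poly_def t_def[symmetric] k_def[symmetric] C_def[symmetric]
    by (simp add: coeffs(1,3)[symmetric] k_def t_def mult_ac)
  have even: "4 * t * N^4 * (\<alpha>^2 + \<beta>^2 * (N - t)) = poly (side_even_poly a b) u"
    unfolding side_even_poly_def by (simp add: coeffs(1,3,5)[symmetric] t_def)
  have disc: "\<alpha>^2 - \<beta>^2 * (N - t) = poly (disc_poly a b) u"
    unfolding disc_poly_def by (simp add: coeffs(3,5)[symmetric])
  have "poly (opposite_side_poly a b) u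
      = 2 * (4 * t * N^4 * (\<alpha>^2 + \<beta>^2 * (N - t))) - 8 * t * N^3 * (2 * t - N) * (\<alpha>^2 - \<beta>^2 * (N - t))"
    unfolding opposite_side_poly_def
    by (simp add: even[symmetric] disc[symmetric] coeffs(1)[symmetric] t_def[symmetric] mult.assoc)
  with sides odd even disc show
    "poly (disc_poly a b ^ 2) u * (seglen (a * u, b * u1) P2)^2
       = poly (side_even_poly a b) u + \<sigma> * poly (side_odd_poly a b) u * u1 * u2"
    "poly (disc_poly a b ^ 2) u * (seglen (a * u, b * u1) P3)^2
       = poly (side_even_poly a b) u - \<sigma> * poly (side_odd_poly a b) u * u1 * u2"
    "poly (disc_poly a b ^ 2) u * (seglen P2 P3)^2 = poly (opposite_side_poly a b) u"
    unfolding P1_def poly_power by simp_all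
qed

lemma disc_poly_nonzero:
  assumes "a > b" "b > 0"
  shows "disc_poly a b \<noteq> 0"
proof -
  have "kappa_sq a b / b^4 + (1 / b^2 - kappa_sq a b) / (a^2 * b^2) > 0"
    using kappa_sq_pos[OF assms] kappa_sq_less[OF assms] assms by (simp add: add_pos_pos)
  then have "poly (disc_poly a b) 0 \<noteq> 0"
    unfolding disc_poly_def alpha_poly_def beta_sq_poly_def normal_sq_poly_def by simp
  then show ?thesis by auto
qed

theorem lemma6:
  fixes a b :: real and P2 P3 :: "real \<Rightarrow> real \<times> real"
  assumes "a > b" and "b > 0"
    and periodic: "\<forall>u\<in>{-1<..<1}.
                     three_periodic a b (a * u, b * sqrt (1 - u^2)) (P2 u) (P3 u)"
    and orient: "\<exists>\<sigma>\<in>{-1, 1::real}. \<forall>u\<in>{-1<..<1}.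
                     \<sigma> * signed_area2 (a * u, b * sqrt (1 - u^2)) (P2 u) (P3 u) > 0"
  shows "\<exists>h0 h1 h2 h3 :: real poly. \<exists>\<epsilon>\<in>{-1, 1::real}. h1 \<noteq> 0 \<and>
           (\<forall>u\<in>{-1<..<1}.
              let P1 = (a * u, b * sqrt (1 - u^2));
                  u1 = sqrt (1 - u^2);
                  u2 = sqrt (1 - rho1 a b * u^2)
              in poly h1 u * (seglen (P2 u) (P3 u))^2 = poly h0 u
               \<and> poly h1 u * (seglen (P3 u) P1)^2 = poly h3 u - \<epsilon> * poly h2 u * u1 * u2
               \<and> poly h1 u * (seglen P1 (P2 u))^2 = poly h3 u + \<epsilon> * poly h2 u * u1 * u2)"
proof -
  obtain \<sigma> where \<sigma>: "\<sigma> \<in> {-1, 1}" and \<sigma>_orient: "\<forall>u\<in>{-1<..<1}.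
      \<sigma> * signed_area2 (a * u, b * sqrt (1 - u^2)) (P2 u) (P3 u) > 0"
    using orient by blast
  show ?thesis
  proof (rule exI[of _ "opposite_side_poly a b"], rule exI[of _ "disc_poly a b ^ 2"],
      rule exI[of _ "side_odd_poly a b"], rule exI[of _ "side_even_poly a b"],
      rule bexI[OF _ \<sigma>], intro conjI ballI)
    show "disc_poly a b ^ 2 \<noteq> 0" using disc_poly_nonzero[OF assms(1,2)] by simp
  qed (use three_periodic_param_side_lengths[OF assms(1,2) _ periodic[rule_format] \<sigma> \<sigma>_orient[rule_format]]
        in \<open>auto simp: Let_def seglen_sym\<close>)
qed

end
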